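(* Let $T$ be the regular rooted tree of valence $p\geq 2$ with the embedded wire diffeology $\mathcal{D}_T$, and equip $\operatorname{Aut}T$ with the functional diffeology. Let $P:\mathbb{R}\to\operatorname{Aut}T$ be a plot of this diffeology. Then for all $m,n\in\mathbb{N}$, the automorphisms $P(n)$ and $P(n+1)$ belong to the same coset of $\operatorname{Stab}(n)$, and the automorphisms $P(-m)$ and $P(-m-1)$ belong to the same coset of $\operatorname{Stab}(m)$.
   Context: Fix a finite alphabet $A$ with $|A|=p\geq 2$. The vertices of $T$ are the finite words over $A$ (the root is the empty word); the length $|u|$ of a word is its level; two vertices are joined by an edge iff they have the form $a_1\dots a_n$ and $a_1\dots a_na_{n+1}$. As a topological space, $T$ is the 1-dimensional CW complex obtained by realizing each edge as a copy of $[0,1]$, with its usual topology. $\operatorname{Aut}T$ is the group of bijections of the vertex set fixing the root and preserving adjacency; each is regarded as a homeomorphism of the geometric realization mapping each edge affinely onto its image edge. $\operatorname{Stab}(n)$ is the (normal) subgroup of $\operatorname{Aut}T$ consisting of automorphisms fixing every vertex of level $n$. A diffeology on a set $X$ is a collection of maps $U\to X$ ("plots"), $U$ ranging over open subsets of all $\mathbb{R}^n$, containing all constant maps, closed under precomposition with smooth maps, and satisfying the sheaf condition. The diffeology generated by a set $\mathcal{A}$ of maps is the smallest diffeology containing $\mathcal{A}$. The embedded wire diffeology $\mathcal{D}_T$ is the diffeology on $T$ generated by all maps $\gamma:\mathbb{R}\to T$ that are injective, continuous, and homeomorphisms onto their images. A map between diffeological spaces is smooth if it sends plots to plots. Every element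 of $\operatorname{Aut}T$ is smooth $T\to T$. The product diffeology on $X\times Y$ is the coarsest diffeology making both projections smooth. The functional diffeology on $C^\infty(T,T)$ is the coarsest diffeology such that the evaluation map $C^\infty(T,T)\times T\to T$, $(f,x)\mapsto f(x)$, is smooth; $\operatorname{Aut}T\subseteq C^\infty(T,T)$ carries the induced subset diffeology. Equivalently, $P:U\to\operatorname{Aut}T$ is a plot iff $U\times T\to T$, $(u,x)\mapsto P(u)(x)$, is smooth. *)

theory Defs
  imports "HOL-Analysis.Analysis"
begin

text \<open>Vertices: finite words over the alphabet (the type 'a, with CARD('a) = p).
  The children of u are the words u @ [a].\<close>

definition tree_adj :: "'a list \<Rightarrow> 'a list \<Rightarrow> bool" where
  "tree_adj u v \<longleftrightarrow> (\<exists>a. v = u @ [a]) \<or> (\<exists>a. u = v @ [a])"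

text \<open>Points of the geometric realization: the pair (w, t) with w non-empty and
  0 < t \<le> 1 is the point at parameter t on the edge from butlast w to w (so (w,1) is
  the vertex w); the root is ([], 1).\<close>

definition tree_points :: "('a list \<times> real) set" where
  "tree_points = {(w, t). (w = [] \<and> t = 1) \<or> (w \<noteq> [] \<and> 0 < t \<and> t \<le> 1)}"

definition edge_map :: "'a list \<Rightarrow> real \<Rightarrow> 'a list \<times> real" where
  "edge_map w s = (if s = 0 then (butlast w, 1) else (w, s))"

text \<open>The CW (weak) topology: a set is open iff its preimage under every edge map
  is open in [0,1].\<close>

definition tree_top :: "('a list \<times> real) topology" where
  "tree_top = topology (\<lambda>U. U \<subseteq> tree_points \<and>
     (\<forall>w. w \<noteq> [] \<longrightarrow>
        openin (top_of_set {0..1}) {s \<in> {0..1}. edge_map w s \<in> U}))"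

definition tree_aut :: "('a list \<Rightarrow> 'a list) set" where
  "tree_aut = {\<sigma>. bij \<sigma> \<and> \<sigma> [] = [] \<and>
      (\<forall>u v. tree_adj u v \<longleftrightarrow> tree_adj (\<sigma> u) (\<sigma> v))}"

text \<open>Action on the geometric realization (each edge mapped affinely onto its image).\<close>

definition aut_act :: "('a list \<Rightarrow> 'a list) \<Rightarrow> 'a list \<times> real \<Rightarrow> 'a list \<times> real" where
  "aut_act \<sigma> x = (\<sigma> (fst x), snd x)"

definition Stab :: "nat \<Rightarrow> ('a list \<Rightarrow> 'a list) set" where
  "Stab n = {g \<in> tree_aut. \<forall>w. length w = n \<longrightarrow> g w = w}"

definition same_coset :: "('a list \<Rightarrow> 'a list) set \<Rightarrow> ('a list \<Rightarrow> 'a list)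
     \<Rightarrow> ('a list \<Rightarrow> 'a list) \<Rightarrow> bool" where
  "same_coset H \<sigma> \<tau> \<longleftrightarrow> inv \<sigma> \<circ> \<tau> \<in> H"

text \<open>R^n is realized as the subspace of (nat \<Rightarrow> real) of sequences vanishing from
  index n on; its subspace topology is the usual one.\<close>

definition Rn :: "nat \<Rightarrow> (nat \<Rightarrow> real) set" where
  "Rn n = {x. \<forall>i\<ge>n. x i = 0}"

definition open_dom :: "nat \<Rightarrow> (nat \<Rightarrow> real) set \<Rightarrow> bool" where
  "open_dom n U \<longleftrightarrow> openin (top_of_set (Rn n)) U"

fun ipd :: "nat list \<Rightarrow> ((nat \<Rightarrow> real) \<Rightarrow> real) \<Rightarrow> (nat \<Rightarrow> real) \<Rightarrow> real" where
  "ipd [] f = f"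
| "ipd (i # is) f = (\<lambda>x. deriv (\<lambda>t. ipd is f (x(i := t))) (x i))"

definition smooth_fun :: "nat \<Rightarrow> (nat \<Rightarrow> real) set \<Rightarrow> ((nat \<Rightarrow> real) \<Rightarrow> real) \<Rightarrow> bool" where
  "smooth_fun n U g \<longleftrightarrow>
     (\<forall>is. set is \<subseteq> {..<n} \<longrightarrow>
        continuous_on U (ipd is g) \<and>
        (\<forall>i<n. \<forall>x\<in>U. (\<lambda>t. ipd is g (x(i := t))) differentiable (at (x i))))"

definition smooth_map :: "nat \<Rightarrow> (nat \<Rightarrow> real) set \<Rightarrow> nat
     \<Rightarrow> ((nat \<Rightarrow> real) \<Rightarrow> (nat \<Rightarrow> real)) \<Rightarrow> bool" where
  "smooth_map m V n F \<longleftrightarrow> (\<forall>x\<in>V. F x \<in> Rn n) \<and> (\<forall>j<n. smooth_fun m V (\<lambda>x. F x j))"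

text \<open>A parametrization is a triple (n, U, P) with U an open subset of R^n and
  P : U \<rightarrow> X (values of P outside U are irrelevant).\<close>

type_synonym 'b param = "nat \<times> (nat \<Rightarrow> real) set \<times> ((nat \<Rightarrow> real) \<Rightarrow> 'b)"

definition is_diffeology :: "'b set \<Rightarrow> 'b param set \<Rightarrow> bool" where
  "is_diffeology X D \<longleftrightarrow>
     (\<forall>n U P. (n, U, P) \<in> D \<longrightarrow> open_dom n U \<and> P ` U \<subseteq> X)
   \<and> (\<forall>n U P Q. (n, U, P) \<in> D \<longrightarrow> (\<forall>u\<in>U. P u = Q u) \<longrightarrow> (n, U, Q) \<in> D)
   \<and> (\<forall>n U x. open_dom n U \<longrightarrow> x \<in> X \<longrightarrow> (n, U, \<lambda>_. x) \<in> D)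
   \<and> (\<forall>n U P m V F. (n, U, P) \<in> D \<longrightarrow> open_dom m V \<longrightarrow> smooth_map m V n F
        \<longrightarrow> F ` V \<subseteq> U \<longrightarrow> (m, V, P \<circ> F) \<in> D)
   \<and> (\<forall>n U P. open_dom n U \<longrightarrow> P ` U \<subseteq> X \<longrightarrow>
        (\<forall>u\<in>U. \<exists>V. open_dom n V \<and> u \<in> V \<and> V \<subseteq> U \<and> (n, V, P) \<in> D)
        \<longrightarrow> (n, U, P) \<in> D)"

definition generated_diffeology :: "'b set \<Rightarrow> 'b param set \<Rightarrow> 'b param set" where
  "generated_diffeology X A = \<Inter> {D. is_diffeology X D \<and> A \<subseteq> D}"

text \<open>Generators of the embedded wire diffeology: maps R \<rightarrow> T that are embeddings
  (injective, continuous, homeomorphisms onto their images); R is R^1.\<close>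

definition wire_generators :: "('a list \<times> real) param set" where
  "wire_generators = {(1, Rn 1, \<lambda>x. \<gamma> (x 0)) | \<gamma>. embedding_map euclideanreal tree_top \<gamma>}"

definition wire_diffeology :: "('a list \<times> real) param set" where
  "wire_diffeology = generated_diffeology tree_points wire_generators"

text \<open>Plots R \<rightarrow> Aut T of the functional diffeology: (u, x) \<mapsto> P(u)(x) is smooth
  R \<times> T \<rightarrow> T, where R \<times> T carries the product diffeology, whose plots are the pairs
  (Q1, Q2) with Q1 a smooth map into R and Q2 a plot of T.\<close>

definition functional_plot_R :: "(real \<Rightarrow> ('a list \<Rightarrow> 'a list)) \<Rightarrow> bool" where
  "functional_plot_R P \<longleftrightarrow> (\<forall>u. P u \<in> tree_aut) \<and>
     (\<forall>n V Q1 Q2. open_dom n V \<longrightarrow> smooth_map n V 1 Q1 \<longrightarrow> (n, V, Q2) \<in> wire_diffeology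
        \<longrightarrow> (n, V, \<lambda>v. aut_act (P (Q1 v 0)) (Q2 v)) \<in> wire_diffeology)"

end

theory Submission
  imports Defs
begin

text \<open>A plot \<open>P\<close> of the functional diffeology is in fact constant, so all the
  cosets in question coincide. Plots of the wire diffeology are continuous, because the
  continuous parametrizations form a diffeology containing the generating embeddings. Hence
  for each vertex \<open>x\<close> the map \<open>r \<mapsto> P(r)(x)\<close> is a continuous map from
  \<open>\<real>\<close> into the vertex set of \<open>T\<close>, which is discrete: the open star of a vertex
  contains no other vertex. By connectedness of \<open>\<real>\<close> it is constant.\<close>

lemma istopology_tree_open:
  "istopology (\<lambda>U. U \<subseteq> tree_points \<and>
     (\<forall>w. w \<noteq> [] \<longrightarrow> openin (top_of_set {0..1}) {s \<in> {0..1}. edge_map w s \<in> U}))"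
proof -
  have "{s \<in> {0..1}. edge_map w s \<in> S \<inter> T} =
      {s \<in> {0..1}. edge_map w s \<in> S} \<inter> {s \<in> {0..1}. edge_map w s \<in> T}"
    "{s \<in> {0..1}. edge_map w s \<in> \<Union>K} = (\<Union>U\<in>K. {s \<in> {0..1}. edge_map w s \<in> U})"
    for w and S T :: "('a list \<times> real) set" and K
    by auto
  then show ?thesis
    unfolding istopology_def by auto
qed

lemma openin_tree_top:
  "openin tree_top U \<longleftrightarrow> U \<subseteq> tree_points \<and>
     (\<forall>w. w \<noteq> [] \<longrightarrow> openin (top_of_set {0..1}) {s \<in> {0..1}. edge_map w s \<in> U})"
  unfolding tree_top_def topology_inverse'[OF istopology_tree_open] ..

lemma openin_tree_top_if_edge_interiors:
  assumes "U \<subseteq> tree_points" and "\<And>w s. w \<noteq> [] \<Longrightarrow> 0 < s \<Longrightarrow> s < 1 \<Longrightarrow> (w, s) \<in> U"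
  shows "openin tree_top U"
  unfolding openin_tree_top
proof (intro conjI allI impI)
  fix w :: "'a list" assume "w \<noteq> []"
  define F where "F = {s \<in> {0, 1::real}. edge_map w s \<notin> U}"
  have "closed F" unfolding F_def by (simp add: finite_imp_closed)
  moreover have "{s \<in> {0..1}. edge_map w s \<in> U} = {0..1} \<inter> - F"
    using assms(2)[OF \<open>w \<noteq> []\<close>] unfolding F_def by (auto simp: edge_map_def)
  ultimately show "openin (top_of_set {0..1}) {s \<in> {0..1}. edge_map w s \<in> U}"
    by (auto intro: openin_open_Int)
qed (fact assms(1))

lemma topspace_tree_top: "topspace tree_top = tree_points"
proof
  show "topspace tree_top \<subseteq> tree_points"
    using openin_topspace[of tree_top] unfolding openin_tree_top by blast
  have "openin tree_top tree_points"
    by (rule openin_tree_top_if_edge_interiors) (auto simp: tree_points_def)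
  then show "tree_points \<subseteq> topspace tree_top"
    by (rule openin_subset)
qed

lemma continuous_map_vertex_valued_constant:
  assumes "connected_space X" and "continuous_map X tree_top (\<lambda>x. (f x, 1))"
    and "x \<in> topspace X" and "y \<in> topspace X"
  shows "f y = f x"
proof -
  let ?A = "{z \<in> topspace X. f z = f x}"
  have star: "openin tree_top (tree_points - {(w, 1) | w. w \<noteq> f x})"
    and punctured: "openin tree_top (tree_points - {(f x, 1)})"
    by (rule openin_tree_top_if_edge_interiors; force simp: tree_points_def)+
  have "?A = {z \<in> topspace X. (f z, 1) \<in> tree_points - {(w, 1) | w. w \<noteq> f x}}"
    by (auto simp: tree_points_def)
  then have "openin X ?A"
    using openin_continuous_map_preimage[OF assms(2) star] by simp
  moreover have "topspace X - ?A = {z \<in> topspace X. (f z, 1) \<in> tree_points - {(f x, 1)}}"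
    by (auto simp: tree_points_def)
  then have "closedin X ?A"
    using openin_continuous_map_preimage[OF assms(2) punctured]
    by (simp add: closedin_def)
  ultimately have "?A = topspace X"
    using assms(1,3) unfolding connected_space_clopen_in by blast
  then show ?thesis using assms(4) by blast
qed

lemma generated_diffeology_least:
  "is_diffeology X D \<Longrightarrow> A \<subseteq> D \<Longrightarrow> generated_diffeology X A \<subseteq> D"
  unfolding generated_diffeology_def by blast

lemma constant_in_generated_diffeology:
  assumes "open_dom n U" and "x \<in> X"
  shows "(n, U, \<lambda>_. x) \<in> generated_diffeology X A"
  using assms unfolding generated_diffeology_def is_diffeology_def by blast

lemma smooth_map_imp_continuous_on:
  assumes "smooth_map m V n F"
  shows "continuous_on V F"
proof (rule continuous_on_coordinatewise_then_product)
  fix j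
  show "continuous_on V (\<lambda>x. F x j)"
  proof (cases "j < n")
    case True
    with assms have "smooth_fun m V (\<lambda>x. F x j)" unfolding smooth_map_def by blast
    then show ?thesis unfolding smooth_fun_def by (metis empty_set empty_subsetI ipd.simps(1))
  next
    case False
    with assms have "\<forall>x\<in>V. F x j = 0" unfolding smooth_map_def Rn_def by auto
    then show ?thesis using continuous_on_cong[of V V _ "\<lambda>_. 0"] by auto
  qed
qed

definition continuous_params :: "('a list \<times> real) param set" where
  "continuous_params = {(n, U, Q). open_dom n U \<and> continuous_map (top_of_set U) tree_top Q}"

lemma is_diffeology_continuous_params: "is_diffeology tree_points continuous_params"
  unfolding is_diffeology_def
proof (intro conjI allI impI)
  fix n U and P :: "(nat \<Rightarrow> real) \<Rightarrow> 'a list \<times> real"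
  assume "(n, U, P) \<in> continuous_params"
  then show "open_dom n U" "P ` U \<subseteq> tree_points"
    unfolding continuous_params_def continuous_map by (auto simp: topspace_tree_top)
next
  fix n U and P Q :: "(nat \<Rightarrow> real) \<Rightarrow> 'a list \<times> real"
  assume "(n, U, P) \<in> continuous_params" and "\<forall>u\<in>U. P u = Q u"
  then show "(n, U, Q) \<in> continuous_params"
    unfolding continuous_params_def by (auto intro: continuous_map_eq)
next
  fix n U and x :: "'a list \<times> real"
  assume "open_dom n U" and "x \<in> tree_points"
  then show "(n, U, \<lambda>_. x) \<in> continuous_params"
    unfolding continuous_params_def by (simp add: topspace_tree_top)
next
  fix n U m V F and P :: "(nat \<Rightarrow> real) \<Rightarrow> 'a list \<times> real"
  assume P: "(n, U, P) \<in> continuous_params" and "open_dom m V"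
    and F: "smooth_map m V n F" "F ` V \<subseteq> U"
  have "continuous_map (top_of_set V) (top_of_set U) F"
    using smooth_map_imp_continuous_on[OF F(1)] F(2) by auto
  moreover have "continuous_map (top_of_set U) tree_top P"
    using P unfolding continuous_params_def by simp
  ultimately have "continuous_map (top_of_set V) tree_top (P \<circ> F)"
    by (rule continuous_map_compose)
  with \<open>open_dom m V\<close> show "(m, V, P \<circ> F) \<in> continuous_params"
    unfolding continuous_params_def by simp
next
  fix n U and P :: "(nat \<Rightarrow> real) \<Rightarrow> 'a list \<times> real"
  assume "open_dom n U"
    and local: "\<forall>u\<in>U. \<exists>V. open_dom n V \<and> u \<in> V \<and> V \<subseteq> U \<and> (n, V, P) \<in> continuous_params"
  let ?I = "{V. V \<subseteq> U \<and> open_dom n V \<and> (n, V, P) \<in> continuous_params}"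
  have "continuous_map (top_of_set U) tree_top P"
  proof (rule pasting_lemma[where I = ?I and T = id and f = "\<lambda>_. P"])
    fix V assume "V \<in> ?I"
    then show "openin (top_of_set U) (id V)"
      using \<open>open_dom n U\<close> unfolding open_dom_def
      by (metis (no_types, lifting) id_apply mem_Collect_eq openin_imp_subset openin_subset_trans)
    from \<open>V \<in> ?I\<close> show "continuous_map (subtopology (top_of_set U) (id V)) tree_top P"
      unfolding continuous_params_def by (auto simp: subtopology_subtopology Int_absorb1)
  qed (use local in auto)
  with \<open>open_dom n U\<close> show "(n, U, P) \<in> continuous_params"
    unfolding continuous_params_def by simp
qed

lemma open_dom_Rn: "open_dom n (Rn n)"
  unfolding open_dom_def by simp

lemma wire_generators_subset_continuous_params: "wire_generators \<subseteq> continuous_params"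
proof
  fix g :: "('a list \<times> real) param"
  assume "g \<in> wire_generators"
  then obtain \<gamma> where g: "g = (1, Rn 1, \<lambda>x. \<gamma> (x 0))"
    and "embedding_map euclideanreal tree_top \<gamma>"
    unfolding wire_generators_def by auto
  then have "continuous_map euclideanreal tree_top \<gamma>"
    unfolding embedding_map_def
    using continuous_map_in_subtopology homeomorphic_imp_continuous_map by blast
  moreover have "continuous_map (top_of_set (Rn 1)) euclideanreal (\<lambda>x::nat\<Rightarrow>real. x 0)"
    using continuous_on_product_then_coordinatewise[OF continuous_on_id, of "Rn 1" 0] by simp
  ultimately show "g \<in> continuous_params"
    unfolding g continuous_params_def
    using continuous_map_compose[of _ euclideanreal "\<lambda>x::nat\<Rightarrow>real. x 0" tree_top \<gamma>]
    by (simp add: o_def open_dom_Rn)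
qed

lemma wire_diffeology_subset_continuous_params: "wire_diffeology \<subseteq> continuous_params"
  unfolding wire_diffeology_def
  by (rule generated_diffeology_least[OF is_diffeology_continuous_params
        wire_generators_subset_continuous_params])

lemma ipd_coordinate_or_constant:
  "ipd is (\<lambda>x. x i) = (\<lambda>x. x i) \<or> (\<exists>c. ipd is (\<lambda>x. x i) = (\<lambda>_. c))"
proof (induction "is")
  case (Cons j js)
  have coordinate_slice: "(\<lambda>t. (x(j := t)) i) = (if j = i then (\<lambda>t. t) else (\<lambda>_. x i))" for x :: "nat \<Rightarrow> real"
    by auto
  from Cons.IH show ?case
  proof
    assume "ipd js (\<lambda>x. x i) = (\<lambda>x. x i)"
    then have "ipd (j # js) (\<lambda>x. x i) = (\<lambda>_. if j = i then 1 else 0)"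
      by (simp add: coordinate_slice fun_eq_iff)
    then show ?case by blast
  next
    assume "\<exists>c. ipd js (\<lambda>x. x i) = (\<lambda>_. c)"
    then have "ipd (j # js) (\<lambda>x. x i) = (\<lambda>_. 0)"
      by (auto simp: fun_eq_iff)
    then show ?case by blast
  qed
qed simp

lemma smooth_fun_coordinate: "smooth_fun n U (\<lambda>x. x i)"
  unfolding smooth_fun_def
proof (intro allI impI conjI ballI)
  fix "is" :: "nat list"
  from ipd_coordinate_or_constant[of "is" i]
  show "continuous_on U (ipd is (\<lambda>x. x i))"
    by (auto intro: continuous_on_product_then_coordinatewise[OF continuous_on_id])
  fix j and x :: "nat \<Rightarrow> real"
  have "(\<lambda>t. (x(j := t)) i) = (if j = i then (\<lambda>t. t) else (\<lambda>_. x i))"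
    by auto
  with ipd_coordinate_or_constant[of "is" i]
  show "(\<lambda>t. ipd is (\<lambda>x. x i) (x(j := t))) differentiable (at (x j))"
    by auto
qed

lemma smooth_map_ident: "V \<subseteq> Rn n \<Longrightarrow> smooth_map m V n (\<lambda>v. v)"
  unfolding smooth_map_def by (auto simp: smooth_fun_coordinate)

lemma functional_plot_R_constant:
  fixes P :: "real \<Rightarrow> 'a list \<Rightarrow> 'a list"
  assumes "functional_plot_R P"
  shows "P r = P s"
proof
  fix x :: "'a list"
  have "(1, Rn 1, \<lambda>_. (x, 1)) \<in> wire_diffeology"
    unfolding wire_diffeology_def
    by (rule constant_in_generated_diffeology[OF open_dom_Rn]) (simp add: tree_points_def)
  then have "(1, Rn 1, \<lambda>v. aut_act (P (v 0)) (x, 1)) \<in> wire_diffeology"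
    using assms smooth_map_ident[of "Rn 1" 1 1] open_dom_Rn[of 1]
    unfolding functional_plot_R_def by blast
  then have vertex_path: "continuous_map (top_of_set (Rn 1)) tree_top (\<lambda>v. (P (v 0) x, 1))"
    using wire_diffeology_subset_continuous_params
    by (auto simp: continuous_params_def aut_act_def)
  have "continuous_on UNIV (\<lambda>r::real. if i = 0 then r else 0)" for i :: nat
    by (cases "i = 0") simp_all
  then have "continuous_map euclideanreal (top_of_set (Rn 1)) (\<lambda>r i. if i = 0 then r else 0)"
    by (auto simp: continuous_map_in_subtopology Rn_def
        intro: continuous_on_coordinatewise_then_product)
  from continuous_map_compose[OF this vertex_path]
  have "continuous_map euclideanreal tree_top (\<lambda>r. (P r x, 1))"
    by (simp add: o_def)
  moreover have "connected_space euclideanreal"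
    using connected_UNIV[where 'a=real] by (simp flip: connectedin_topspace)
  ultimately show "P r x = P s x"
    using continuous_map_vertex_valued_constant[of euclideanreal] by simp
qed

theorem mainTheorem3:
  fixes P :: "real \<Rightarrow> ('a::finite list \<Rightarrow> 'a list)"
  assumes "CARD('a) \<ge> 2"
    and "functional_plot_R P"
  shows "\<forall>m n :: nat.
           same_coset (Stab n) (P (real n)) (P (real n + 1))
         \<and> same_coset (Stab m) (P (- real m)) (P (- real m - 1))"
proof -
  have "P a \<in> tree_aut" for a
    using assms(2) unfolding functional_plot_R_def by blast
  then have "inv (P a) \<circ> P a = id" for a
    unfolding tree_aut_def by (auto simp: bij_is_inj)
  moreover have "id \<in> Stab k" for k
    unfolding Stab_def tree_aut_def by auto
  ultimately have "same_coset (Stab k) (P a) (P b)" for a b k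
    using functional_plot_R_constant[OF assms(2), of b a] by (simp add: same_coset_def)
  then show ?thesis by blast
qed

end
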